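(* Let $S$ be a nearly simple monoid whose kernel contains a minimal idempotent. Then $S$ is completely regular.
   Context: The kernel of a semigroup is its unique minimal two-sided ideal. A monoid is nearly simple if it has a unique minimal two-sided ideal and that ideal contains all non-invertible elements. An idempotent $p$ ($pp=p$) is minimal if minimal for the order $p\le q\iff p=pq=qp$ on idempotents. A semigroup is completely regular if every element $a$ admits $x$ with $a=axa$ and $ax=xa$. Semigroups considered have no zero element. *)

theory Defs
  imports Main
begin

(* The monoid is the whole type 'a :: monoid_mult. *)

definition two_sided_ideal :: "'a::monoid_mult set \<Rightarrow> bool" where
  "two_sided_ideal I \<longleftrightarrow> I \<noteq> {} \<and> (\<forall>s i. i \<in> I \<longrightarrow> s * i \<in> I \<and> i * s \<in> I)"

definition minimal_ideal :: "'a::monoid_mult set \<Rightarrow> bool" where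
  "minimal_ideal I \<longleftrightarrow> two_sided_ideal I \<and>
     (\<forall>J. two_sided_ideal J \<and> J \<subseteq> I \<longrightarrow> J = I)"

definition is_kernel :: "'a::monoid_mult set \<Rightarrow> bool" where
  "is_kernel K \<longleftrightarrow> minimal_ideal K \<and> (\<forall>J. minimal_ideal J \<longrightarrow> J = K)"

definition invertible :: "'a::monoid_mult \<Rightarrow> bool" where
  "invertible a \<longleftrightarrow> (\<exists>b. a * b = 1 \<and> b * a = 1)"

definition nearly_simple :: "'a::monoid_mult itself \<Rightarrow> bool" where
  "nearly_simple _ \<longleftrightarrow> (\<exists>K::'a set. is_kernel K \<and> {a. \<not> invertible a} \<subseteq> K)"

definition idempotent :: "'a::monoid_mult \<Rightarrow> bool" where
  "idempotent p \<longleftrightarrow> p * p = p"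

definition idem_le :: "'a::monoid_mult \<Rightarrow> 'a \<Rightarrow> bool" where
  "idem_le p q \<longleftrightarrow> p = p * q \<and> p = q * p"

definition minimal_idempotent :: "'a::monoid_mult \<Rightarrow> bool" where
  "minimal_idempotent p \<longleftrightarrow> idempotent p \<and>
     (\<forall>q. idempotent q \<and> idem_le q p \<longrightarrow> q = p)"

definition has_zero :: "'a::monoid_mult itself \<Rightarrow> bool" where
  "has_zero _ \<longleftrightarrow> (\<exists>z::'a. \<forall>a. z * a = z \<and> a * z = z)"

definition completely_regular :: "'a::monoid_mult itself \<Rightarrow> bool" where
  "completely_regular _ \<longleftrightarrow> (\<forall>a::'a. \<exists>x. a = a * x * a \<and> a * x = x * a)"

end

theory Submission
  imports Defs
begin

text \<open>
  Let \<open>p\<close> be the minimal idempotent in the kernel \<open>K\<close>. Minimality of \<open>K\<close> gives \<open>K = S p S\<close>,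
  and minimality of \<open>p\<close> makes the local monoid \<open>p S p\<close> a group: writing \<open>p = u g v\<close> with
  \<open>u, g, v \<in> p S p\<close>, both \<open>v u g\<close> and \<open>g v u\<close> are idempotents below \<open>p\<close>, hence equal to \<open>p\<close>.
  For \<open>a = s p t \<in> K\<close> the element \<open>g = p t s p\<close> then has an inverse \<open>c\<close> with
  \<open>p = c c g g = g g c c\<close>, and since \<open>g g t = p t a a\<close> and \<open>s g g = a a s p\<close> this places
  \<open>a\<close> in \<open>S a\<^sup>2 \<inter> a\<^sup>2 S\<close>, which is the classical criterion for \<open>a\<close> to lie in a subgroup.
  Elements outside \<open>K\<close> are units.
\<close>

definition completely_regular_element :: "'a::monoid_mult \<Rightarrow> bool" where
  "completely_regular_element a \<longleftrightarrow> (\<exists>x. a = a * x * a \<and> a * x = x * a)"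

lemma completely_regular_elementI:
  fixes a x y :: "'a::monoid_mult"
  assumes left: "a = x * a * a" and right: "a = a * a * y"
  shows "completely_regular_element a"
proof -
  \<comment> \<open>\<open>e = a y = x a\<close> is the identity of the subgroup containing \<open>a\<close>, and \<open>e y e = e x e\<close> the inverse of \<open>a\<close>.\<close>
  define e where "e = a * y"
  have xa_eq_e: "x * a = e"
  proof -
    have "x * a = x * (a * a * y)" using right by simp
    also have "\<dots> = (x * a * a) * y" by (simp add: mult.assoc)
    finally show ?thesis using left e_def by simp
  qed
  have e_idem: "e * e = e"
  proof -
    have "e * e = x * a * (a * y)" using xa_eq_e e_def by simp
    also have "\<dots> = x * (a * a * y)" by (simp add: mult.assoc)
    finally show ?thesis using right xa_eq_e by simp
  qed
  have ea: "e * a = a" using left xa_eq_e by (simp add: mult.assoc)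
  have ae: "a * e = a" using right e_def by (simp add: mult.assoc)
  define r where "r = e * y * e"
  define l where "l = e * x * e"
  have ar: "a * r = e" using r_def e_def e_idem ae by (metis mult.assoc)
  have la: "l * a = e" using l_def xa_eq_e e_idem ea by (metis mult.assoc)
  have "l = l * e" using l_def e_idem by (metis mult.assoc)
  also have "\<dots> = l * a * r" using ar by (simp add: mult.assoc)
  also have "\<dots> = e * r" using la by simp
  also have "\<dots> = r" using r_def e_idem by (metis mult.assoc)
  finally have "l = r" .
  then show ?thesis
    unfolding completely_regular_element_def using ar la ea by metis
qed

lemma invertible_completely_regular_element:
  assumes "invertible a"
  shows "completely_regular_element a"
proof -
  obtain b where "a * b = 1" "b * a = 1"
    using assms unfolding invertible_def by blast
  then show ?thesis
    unfolding completely_regular_element_def by (metis mult_1_left mult.assoc)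
qed

lemma minimal_ideal_eq_principal:
  fixes K :: "'a::monoid_mult set"
  assumes K: "minimal_ideal K" and b: "b \<in> K"
  shows "K = {u * b * v | u v. True}"
proof -
  let ?J = "{u * b * v | u v. True}"
  have "two_sided_ideal ?J"
    unfolding two_sided_ideal_def by (auto, metis mult.assoc, metis mult.assoc)
  moreover have "?J \<subseteq> K"
    using K b unfolding minimal_ideal_def two_sided_ideal_def by auto
  ultimately show ?thesis
    using K unfolding minimal_ideal_def by blast
qed

lemma minimal_idempotent_eqI:
  assumes "minimal_idempotent p" "q * q = q" "q * p = q" "p * q = q"
  shows "q = p"
  using assms unfolding minimal_idempotent_def idempotent_def idem_le_def by metis

lemma local_monoid_invertible:
  fixes K :: "'a::monoid_mult set"
  assumes K: "minimal_ideal K" and pK: "p \<in> K" and p: "minimal_idempotent p"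
  shows "\<exists>c. c * (p * t * p) = p \<and> (p * t * p) * c = p"
proof -
  have pp: "p * p = p" using p unfolding minimal_idempotent_def idempotent_def by simp
  define g where "g = p * t * p"
  have pg: "p * g = g" "g * p = g" using pp g_def by (metis mult.assoc)+
  have "g = (p * t) * p * 1" using g_def by simp
  then have "g \<in> K" using minimal_ideal_eq_principal[OF K pK] by blast
  then obtain u v where "p = u * g * v"
    using pK minimal_ideal_eq_principal[OF K] by blast
  define u' where "u' = p * u * p"
  define v' where "v' = p * v * p"
  have pu: "p * u' = u'" "u' * p = u'" "p * v' = v'" "v' * p = v'"
    using pp u'_def v'_def by (metis mult.assoc)+
  have p_eq: "p = u' * g * v'"
  proof -
    have "p = p * p * p" using pp by simp
    also have "\<dots> = p * u * (p * g * p) * v * p" using \<open>p = u * g * v\<close> pg by (simp add: mult.assoc)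
    also have "\<dots> = u' * g * v'" using u'_def v'_def by (simp add: mult.assoc)
    finally show ?thesis .
  qed
  have "v' * u' * g = p"
  proof (rule minimal_idempotent_eqI[OF p])
    have "v' * u' * g * (v' * u' * g) = v' * (u' * g * v') * u' * g" by (simp add: mult.assoc)
    also have "\<dots> = v' * u' * g" using p_eq pu by (simp add: mult.assoc)
    finally show "v' * u' * g * (v' * u' * g) = v' * u' * g" .
    show "v' * u' * g * p = v' * u' * g" using pg by (simp add: mult.assoc)
    show "p * (v' * u' * g) = v' * u' * g" using pu by (metis mult.assoc)
  qed
  moreover have "g * v' * u' = p"
  proof (rule minimal_idempotent_eqI[OF p])
    have "g * v' * u' * (g * v' * u') = g * v' * (u' * g * v') * u'" by (simp add: mult.assoc)
    also have "\<dots> = g * v' * u'" using p_eq pu by (simp add: mult.assoc)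
    finally show "g * v' * u' * (g * v' * u') = g * v' * u'" .
    show "g * v' * u' * p = g * v' * u'" using pu by (simp add: mult.assoc)
    show "p * (g * v' * u') = g * v' * u'" using pg by (metis mult.assoc)
  qed
  ultimately show ?thesis using g_def by (metis mult.assoc)
qed

lemma minimal_ideal_completely_regular_element:
  fixes K :: "'a::monoid_mult set"
  assumes K: "minimal_ideal K" and pK: "p \<in> K" and p: "minimal_idempotent p" and aK: "a \<in> K"
  shows "completely_regular_element a"
proof -
  have pp: "p * p = p" using p unfolding minimal_idempotent_def idempotent_def by simp
  then have ppz: "p * (p * z) = p * z" for z by (metis mult.assoc)
  obtain s t where a: "a = s * p * t"
    using aK minimal_ideal_eq_principal[OF K pK] by blast
  define g where "g = p * t * s * p"
  obtain c where cg: "c * g = p" and gc: "g * c = p"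
    using local_monoid_invertible[OF K pK p, of "t * s"] g_def by (auto simp: mult.assoc)
  have pg: "p * g = g" "g * p = g" using pp g_def by (metis mult.assoc)+
  have ccgg: "c * c * (g * g) = p" using cg pg by (metis mult.assoc)
  have ggcc: "g * g * (c * c) = p" using gc pg by (metis mult.assoc)
  have ggt: "g * g * t = p * t * (a * a)" using a g_def ppz by (simp add: mult.assoc)
  have sgg: "s * (g * g) = a * a * (s * p)" using a g_def ppz by (simp add: mult.assoc)
  have "a = s * (c * c * (g * g)) * t" using a ccgg by simp
  also have "\<dots> = (s * c * c * p * t) * a * a" using ggt by (simp add: mult.assoc)
  finally have left: "a = (s * c * c * p * t) * a * a" .
  have "a = s * (g * g * (c * c)) * t" using a ggcc by simp
  also have "\<dots> = a * a * (s * p * c * c * t)" using sgg by (metis mult.assoc)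
  finally have right: "a = a * a * (s * p * c * c * t)" .
  show ?thesis using completely_regular_elementI[OF left right] .
qed

theorem corollary2p9:
  fixes K :: "'a::monoid_mult set"
  assumes "\<not> has_zero TYPE('a)"
    and "nearly_simple TYPE('a)"
    and "is_kernel K"
    and "\<exists>p\<in>K. minimal_idempotent p"
  shows "completely_regular TYPE('a)"
proof -
  obtain K' :: "'a set" where K': "is_kernel K'" and units: "{a. \<not> invertible a} \<subseteq> K'"
    using assms(2) unfolding nearly_simple_def by blast
  have K: "minimal_ideal K" using assms(3) unfolding is_kernel_def by blast
  with K' have "K' = K" unfolding is_kernel_def by blast
  obtain p where "p \<in> K" "minimal_idempotent p" using assms(4) by blast
  have "completely_regular_element a" for a :: 'a
  proof (cases "invertible a")
    case True
    then show ?thesis by (rule invertible_completely_regular_element)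
  next
    case False
    with units \<open>K' = K\<close> have "a \<in> K" by blast
    with K \<open>p \<in> K\<close> \<open>minimal_idempotent p\<close> show ?thesis
      by (rule minimal_ideal_completely_regular_element)
  qed
  then show ?thesis
    unfolding completely_regular_def completely_regular_element_def by blast
qed

end
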